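(* Let $R(3,k)$ be the least $n$ such that every graph on $n$ vertices contains a triangle or an independent set of size $k$. Then: (1) If $\alpha(G)/\overline\alpha_G(1)\ge 4/3$ for every (nonempty) triangle-free graph $G$, then $R(3,k)\le(3/4+o(1))k^2/\log k$. (2) If there is a function $\eta(d)\to0$ as $d\to\infty$ such that every triangle-free graph $G$ of minimum degree $d$ satisfies $\alpha(G)/\overline\alpha_G(1)\ge 2-\eta(d)$, then $R(3,k)\le(1/2+o(1))k^2/\log k$. (3) If for every $\epsilon>0$ there exists $\lambda>0$ such that every (nonempty) triangle-free graph $G$ satisfies $\alpha(G)/\overline\alpha_G(\lambda)\ge 2-\epsilon$, then $R(3,k)\le(1/2+o(1))k^2/\log k$. Here $o(1)$ tends to $0$ as $k\to\infty$.
   Context: $\alpha(G)$ is the maximum size of an independent set of $G$. For $\lambda>0$, $\overline\alpha_G(\lambda)=\lambda P_G'(\lambda)/P_G(\lambda)$ with $P_G(\lambda)=\sum_J\lambda^{|J|}$ over all independent sets $J$ of $G$; this is the expected size of an independent set drawn from the hard-core model $\Pr[J]=\lambda^{|J|}/P_G(\lambda)$ (the uniform distribution when $\lambda=1$). Logarithms are natural. *)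

theory Defs
  imports "HOL-Analysis.Analysis"
begin

text \<open>Finite simple graphs: a finite vertex set V of naturals together with a
symmetric irreflexive edge relation E whose edges lie inside V.  Every finite
graph is isomorphic to one of this form.\<close>

definition sgraph :: "nat set \<Rightarrow> (nat \<Rightarrow> nat \<Rightarrow> bool) \<Rightarrow> bool" where
  "sgraph V E \<longleftrightarrow> finite V \<and> (\<forall>x y. E x y \<longrightarrow> x \<in> V \<and> y \<in> V)
     \<and> (\<forall>x y. E x y \<longrightarrow> E y x) \<and> (\<forall>x. \<not> E x x)"

definition triangle_free :: "nat set \<Rightarrow> (nat \<Rightarrow> nat \<Rightarrow> bool) \<Rightarrow> bool" where
  "triangle_free V E \<longleftrightarrow> \<not> (\<exists>x\<in>V. \<exists>y\<in>V. \<exists>z\<in>V. E x y \<and> E y z \<and> E x z)"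

definition indep_set :: "nat set \<Rightarrow> (nat \<Rightarrow> nat \<Rightarrow> bool) \<Rightarrow> nat set \<Rightarrow> bool" where
  "indep_set V E J \<longleftrightarrow> J \<subseteq> V \<and> (\<forall>x\<in>J. \<forall>y\<in>J. \<not> E x y)"

definition indep_number :: "nat set \<Rightarrow> (nat \<Rightarrow> nat \<Rightarrow> bool) \<Rightarrow> nat" where
  "indep_number V E = Max (card ` {J. indep_set V E J})"

definition indep_poly :: "nat set \<Rightarrow> (nat \<Rightarrow> nat \<Rightarrow> bool) \<Rightarrow> real \<Rightarrow> real" where
  "indep_poly V E t = (\<Sum>J\<in>{J. indep_set V E J}. t ^ card J)"

definition avg_indep :: "nat set \<Rightarrow> (nat \<Rightarrow> nat \<Rightarrow> bool) \<Rightarrow> real \<Rightarrow> real" where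
  "avg_indep V E t = t * deriv (indep_poly V E) t / indep_poly V E t"

definition degree :: "nat set \<Rightarrow> (nat \<Rightarrow> nat \<Rightarrow> bool) \<Rightarrow> nat \<Rightarrow> nat" where
  "degree V E x = card {y\<in>V. E x y}"

definition min_degree :: "nat set \<Rightarrow> (nat \<Rightarrow> nat \<Rightarrow> bool) \<Rightarrow> nat" where
  "min_degree V E = Min (degree V E ` V)"

definition ramsey3 :: "nat \<Rightarrow> nat" where
  "ramsey3 k = (LEAST n. \<forall>E. sgraph {0..<n} E \<longrightarrow>
       \<not> triangle_free {0..<n} E \<or> (\<exists>J. indep_set {0..<n} E J \<and> card J = k))"

end

theory Submission
  imports Defs "HOL-Real_Asymp.Real_Asymp"
begin

text \<open>Shearer's bound via the occupancy method: draw \<open>J\<close> from the hard-core model at fugacity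
  \<open>x\<close> on a triangle-free graph of maximum degree \<open>\<Delta>\<close>, condition on \<open>J - N(v)\<close> and let \<open>y\<^sub>v\<close> be
  the expected number of neighbours of \<open>v\<close> it leaves uncovered.  Then
  \<open>Pr[v \<in> J] \<ge> x/(1+x) \<cdot> exp(-ln(1+x) y\<^sub>v)\<close> by Jensen, while \<open>E|J \<inter> N(v)| = x/(1+x) \<cdot> y\<^sub>v\<close>
  and the latter sums to at most \<open>\<Delta> E|J|\<close>.  Balancing the two bounds gives
  \<open>E|J| \<ge> (1 - o(1)) n ln \<Delta> / \<Delta>\<close> as \<open>x \<rightarrow> 0\<close>.  Since \<open>E|J|\<close> increases with \<open>x\<close>, a hypothesis
  \<open>\<alpha>(G) \<ge> r E|J|\<close> at some fugacity passes to all smaller ones.  A triangle-free graph with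
  \<open>\<alpha>(G) < k\<close> has maximum degree below \<open>k\<close>; peeling off at most \<open>(d + 1) k\<close> vertices leaves a
  core of minimum degree at least \<open>d\<close>, on which \<open>r (1 - o(1)) |core| ln k / k \<le> \<alpha> < k\<close>.
  Hence \<open>R(3,k) \<le> (1/r + o(1)) k\<^sup>2 / ln k\<close>.\<close>

lemma sum_Pow_insert:
  assumes "finite A" "a \<notin> A"
  shows "(\<Sum>S\<in>Pow (insert a A). f S) = (\<Sum>S\<in>Pow A. f S) + (\<Sum>S\<in>Pow A. f (insert a S))"
proof -
  have "inj_on (insert a) (Pow A)"
    using assms(2) by (intro inj_onI) (metis PowD insert_ident subsetD)
  moreover have "Pow A \<inter> insert a ` Pow A = {}" using assms(2) by auto
  ultimately show ?thesis
    using assms(1) by (simp add: Pow_insert sum.union_disjoint sum.reindex)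
qed

lemma sum_Pow_power_card:
  fixes x :: real
  assumes "finite U"
  shows "(\<Sum>S\<in>Pow U. x ^ card S) = (1 + x) ^ card U"
  using assms
proof (induction U rule: finite_induct)
  case (insert a A)
  have "\<And>S. S \<in> Pow A \<Longrightarrow> card (insert a S) = Suc (card S)"
    using insert.hyps by (auto intro: card_insert_disjoint finite_subset)
  then show ?case
    using insert by (simp add: sum_Pow_insert sum_distrib_left[symmetric] algebra_simps)
qed simp

lemma sum_Pow_card_power_card:
  fixes x :: real
  assumes "finite U"
  shows "(\<Sum>S\<in>Pow U. real (card S) * x ^ card S) = real (card U) * x * (1 + x) ^ (card U - 1)"
  using assms
proof (induction U rule: finite_induct)
  case (insert a A)
  have "\<And>S. S \<in> Pow A \<Longrightarrow> card (insert a S) = Suc (card S)"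
    using insert.hyps by (auto intro: card_insert_disjoint finite_subset)
  then have "(\<Sum>S\<in>Pow (insert a A). real (card S) * x ^ card S)
      = (1 + x) * (real (card A) * x * (1 + x) ^ (card A - 1)) + x * (1 + x) ^ card A"
    using insert by (simp add: sum_Pow_insert sum_Pow_power_card sum.distrib
        sum_distrib_left[symmetric] algebra_simps)
  also have "\<dots> = real (card (insert a A)) * x * (1 + x) ^ (card (insert a A) - 1)"
    using insert.hyps by (cases "card A") (simp_all add: algebra_simps)
  finally show ?case .
qed simp

lemma power_diff_same_sign:
  fixes q :: real
  assumes "1 \<le> q"
  shows "0 \<le> (real m - real n) * (q ^ m - q ^ n)"
proof (cases "n \<le> m")
  case True
  then show ?thesis using assms by (intro mult_nonneg_nonneg) (auto intro: power_increasing)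
next
  case False
  then show ?thesis using assms by (intro mult_nonpos_nonpos) (auto intro: power_increasing)
qed

text \<open>Chebyshev's sum inequality: symmetrizing the difference of the two sides yields a sum of
  terms \<open>(g J - g K) (b^g J a^g K - a^g J b^g K) \<ge> 0\<close>.\<close>
lemma sum_card_power_cross_le:
  fixes a b :: real and g :: "'a \<Rightarrow> nat"
  assumes "finite A" "0 < a" "a \<le> b"
  shows "(\<Sum>J\<in>A. real (g J) * a ^ g J) * (\<Sum>K\<in>A. b ^ g K)
       \<le> (\<Sum>J\<in>A. real (g J) * b ^ g J) * (\<Sum>K\<in>A. a ^ g K)"
proof -
  define F where "F J K = real (g J) * (b ^ g J * a ^ g K - a ^ g J * b ^ g K)" for J K
  have "(\<Sum>J\<in>A. real (g J) * b ^ g J) * (\<Sum>K\<in>A. a ^ g K)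
      - (\<Sum>J\<in>A. real (g J) * a ^ g J) * (\<Sum>K\<in>A. b ^ g K) = (\<Sum>J\<in>A. \<Sum>K\<in>A. F J K)"
    unfolding sum_product F_def sum_subtractf[symmetric]
    by (intro sum.cong refl) (simp add: algebra_simps)
  also have "\<dots> = (\<Sum>J\<in>A. \<Sum>K\<in>A. F J K + F K J) / 2"
    using sum.swap[of F A A] by (simp add: sum.distrib)
  also have "\<dots> = (\<Sum>J\<in>A. \<Sum>K\<in>A.
      a ^ (g J + g K) * ((real (g J) - real (g K)) * ((b / a) ^ g J - (b / a) ^ g K))) / 2"
    using assms(2) by (intro arg_cong[where f = "\<lambda>s. s / 2"] sum.cong refl)
      (simp add: F_def power_add power_divide field_simps)
  also have "\<dots> \<ge> 0"
    using assms
    by (intro divide_nonneg_pos sum_nonneg mult_nonneg_nonneg power_diff_same_sign) auto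
  finally show ?thesis by simp
qed

text \<open>Jensen's inequality for \<open>t \<mapsto> exp (- c t)\<close>, via the tangent line at the weighted mean.\<close>
lemma exp_weighted_mean_le:
  fixes w y :: "'a \<Rightarrow> real"
  assumes "finite A" "\<And>i. i \<in> A \<Longrightarrow> 0 \<le> w i" "0 < sum w A"
  shows "sum w A * exp (- c * ((\<Sum>i\<in>A. w i * y i) / sum w A))
       \<le> (\<Sum>i\<in>A. w i * exp (- c * y i))"
proof -
  define m where "m = (\<Sum>i\<in>A. w i * y i) / sum w A"
  have tangent: "exp (- c * m) * (1 - c * (y i - m)) \<le> exp (- c * y i)" for i
  proof -
    have "exp (- c * m) * (1 - c * (y i - m)) \<le> exp (- c * m) * exp (- c * (y i - m))"
      using exp_ge_add_one_self[of "- c * (y i - m)"] by (intro mult_left_mono) auto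
    then show ?thesis by (simp add: exp_add[symmetric] algebra_simps)
  qed
  have "(\<Sum>i\<in>A. w i * (exp (- c * m) * (1 - c * (y i - m))))
      = exp (- c * m) * (sum w A - c * (\<Sum>i\<in>A. w i * y i) + c * m * sum w A)"
    by (simp add: algebra_simps sum.distrib sum_subtractf sum_distrib_left sum_distrib_right)
  also have "\<dots> = sum w A * exp (- c * m)"
    using assms(3) by (simp add: m_def)
  finally have "sum w A * exp (- c * m) = (\<Sum>i\<in>A. w i * (exp (- c * m) * (1 - c * (y i - m))))" ..
  also have "\<dots> \<le> (\<Sum>i\<in>A. w i * exp (- c * y i))"
    using assms(2) tangent by (intro sum_mono mult_left_mono) auto
  finally show ?thesis by (simp add: m_def)
qed

text \<open>Split at \<open>c y = s ln D\<close> with \<open>s = \<theta> c / a < 1\<close>: above it the linear bound suffices,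
  below it \<open>a exp (- c y) \<ge> a D powr (- s)\<close>, which eventually exceeds \<open>\<theta> ln D / D\<close>.\<close>
lemma exp_linear_tradeoff:
  fixes a c \<theta> :: real
  assumes "0 < a" "0 < c" "0 < \<theta>" "\<theta> < a / c"
  shows "\<forall>\<^sub>F D in at_top. \<forall>y t.
           a * exp (- c * y) \<le> t \<longrightarrow> a * y \<le> D * t \<longrightarrow> \<theta> * ln D / D \<le> t"
proof -
  define s where "s = \<theta> * c / a"
  have s: "0 < s" "0 < 1 - s" using assms by (auto simp: s_def field_simps)
  have "\<forall>\<^sub>F D in at_top. \<theta> * ln D \<le> a * D powr (1 - s)"
    using assms(1) s(2) by real_asymp
  with eventually_gt_at_top[of 1] show ?thesis
  proof eventually_elim
    case (elim D)
    show ?case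
    proof (intro allI impI)
      fix y t assume exp_le: "a * exp (- c * y) \<le> t" and lin_le: "a * y \<le> D * t"
      show "\<theta> * ln D / D \<le> t"
      proof (cases "s * ln D \<le> c * y")
        case True
        then have "\<theta> * ln D \<le> a * y"
          using assms(1,2) by (simp add: s_def field_simps)
        then show ?thesis using lin_le elim by (simp add: field_simps)
      next
        case False
        have "\<theta> * ln D / D \<le> a * D powr (1 - s) / D"
          using elim by (intro divide_right_mono) auto
        also have "\<dots> = a * exp (- s * ln D)"
          using elim by (simp add: powr_def exp_diff exp_minus field_simps)
        also have "\<dots> \<le> a * exp (- c * y)"
          using False assms(1) by (intro mult_left_mono) auto
        finally show ?thesis using exp_le by simp
      qed
    qed
  qed
qed

lemma real_card_filter: "finite A \<Longrightarrow> real (card {a\<in>A. P a}) = (\<Sum>a\<in>A. if P a then 1 else 0)"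
  using sum.inter_filter[of A "\<lambda>_. 1 :: real" P] by simp

section \<open>Independent sets and the hard-core model\<close>

lemma sgraphD:
  assumes "sgraph V E"
  shows sgraph_finite: "finite V" and sgraph_edge_in: "E x y \<Longrightarrow> x \<in> V \<and> y \<in> V"
    and sgraph_sym: "E x y \<Longrightarrow> E y x" and sgraph_irrefl: "\<not> E x x"
  using assms by (auto simp: sgraph_def)

lemma finite_indep_sets: "sgraph V E \<Longrightarrow> finite {J. indep_set V E J}"
  by (rule finite_subset[of _ "Pow V"]) (auto simp: indep_set_def sgraph_finite)

lemma indep_set_empty [simp]: "indep_set V E {}"
  by (simp add: indep_set_def)

lemma indep_set_subset: "indep_set V E J \<Longrightarrow> J \<subseteq> V"
  by (simp add: indep_set_def)

lemma indep_number_ge: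
  assumes "sgraph V E" "indep_set V E J"
  shows "card J \<le> indep_number V E"
  unfolding indep_number_def using assms finite_indep_sets by (intro Max_ge) auto

lemma indep_number_attained:
  assumes "sgraph V E"
  obtains J where "indep_set V E J" "card J = indep_number V E"
proof -
  have "{J. indep_set V E J} \<noteq> {}"
    using indep_set_empty by blast
  then have "indep_number V E \<in> card ` {J. indep_set V E J}"
    unfolding indep_number_def using assms finite_indep_sets by (intro Max_in) auto
  then show ?thesis using that by auto
qed

lemma triangle_freeD:
  assumes "sgraph V E" "triangle_free V E" "E x y" "E y z" "E x z"
  shows False
proof -
  have "x \<in> V" "y \<in> V" "z \<in> V" using assms(3,4) sgraph_edge_in[OF assms(1)] by blast+
  with assms(2-) show False unfolding triangle_free_def by blast
qed

lemma indep_set_neighbourhood: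
  assumes "sgraph V E" "triangle_free V E"
  shows "indep_set V E {u\<in>V. E v u}"
  using triangle_freeD[OF assms] sgraph_sym[OF assms(1)] by (auto simp: indep_set_def)

lemma degree_le_indep_number:
  assumes "sgraph V E" "triangle_free V E"
  shows "degree V E v \<le> indep_number V E"
  unfolding degree_def using assms by (intro indep_number_ge indep_set_neighbourhood)

lemma indep_poly_pos:
  assumes "sgraph V E" "t > 0"
  shows "indep_poly V E t > 0"
proof -
  have "1 = t ^ card ({}::nat set)" by simp
  also have "\<dots> \<le> indep_poly V E t"
    unfolding indep_poly_def using assms finite_indep_sets by (intro member_le_sum) auto
  finally show ?thesis by simp
qed

lemma avg_indep_eq:
  assumes "sgraph V E"
  shows "avg_indep V E t = (\<Sum>J | indep_set V E J. real (card J) * t ^ card J) / indep_poly V E t"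
proof -
  have "(indep_poly V E has_real_derivative
          (\<Sum>J | indep_set V E J. real (card J) * t ^ (card J - 1))) (at t)"
    unfolding indep_poly_def[abs_def] by (auto intro!: derivative_eq_intros)
  then have "t * deriv (indep_poly V E) t
      = (\<Sum>J | indep_set V E J. t * (real (card J) * t ^ (card J - 1)))"
    by (simp add: DERIV_imp_deriv sum_distrib_left)
  also have "\<dots> = (\<Sum>J | indep_set V E J. real (card J) * t ^ card J)"
    by (intro sum.cong refl) (simp add: power_eq_if)
  finally show ?thesis by (simp add: avg_indep_def)
qed

lemma avg_indep_pos:
  assumes "sgraph V E" "V \<noteq> {}" "t > 0"
  shows "avg_indep V E t > 0"
proof -
  obtain v where "v \<in> V" using assms(2) by auto
  then have "indep_set V E {v}" using sgraph_irrefl[OF assms(1)] by (auto simp: indep_set_def)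
  then have "real (card {v}) * t ^ card {v} \<le> (\<Sum>J | indep_set V E J. real (card J) * t ^ card J)"
    using assms finite_indep_sets by (intro member_le_sum) auto
  then show ?thesis using assms indep_poly_pos by (auto simp: avg_indep_eq)
qed

lemma avg_indep_mono:
  assumes "sgraph V E" "0 < a" "a \<le> b"
  shows "avg_indep V E a \<le> avg_indep V E b"
proof -
  have "(\<Sum>J | indep_set V E J. real (card J) * a ^ card J) * indep_poly V E b
     \<le> (\<Sum>J | indep_set V E J. real (card J) * b ^ card J) * indep_poly V E a"
    unfolding indep_poly_def using assms finite_indep_sets by (intro sum_card_power_cross_le)
  then show ?thesis
    using assms indep_poly_pos[of V E a] indep_poly_pos[of V E b]
    by (simp add: avg_indep_eq divide_simps)
qed

lemma sum_card_power_eq_sum_vertices: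
  fixes x :: real
  assumes "sgraph V E"
  shows "(\<Sum>J | indep_set V E J. real (card J) * x ^ card J)
       = (\<Sum>v\<in>V. \<Sum>J | indep_set V E J. if v \<in> J then x ^ card J else 0)"
proof -
  have "real (card J) * x ^ card J = (\<Sum>v\<in>V. if v \<in> J then x ^ card J else 0)"
    if "indep_set V E J" for J
  proof -
    have "(\<Sum>v\<in>V. if v \<in> J then x ^ card J else 0) = (\<Sum>v | v \<in> V \<and> v \<in> J. x ^ card J)"
      by (rule sum.inter_filter[OF sgraph_finite[OF assms], symmetric])
    also have "{v. v \<in> V \<and> v \<in> J} = J" using indep_set_subset[OF that] by auto
    finally show ?thesis by simp
  qed
  then show ?thesis by (subst sum.swap) (intro sum.cong refl, simp)
qed

section \<open>The occupancy method\<close>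

definition avoiding_indep_sets :: "nat set \<Rightarrow> (nat \<Rightarrow> nat \<Rightarrow> bool) \<Rightarrow> nat \<Rightarrow> nat set set" where
  "avoiding_indep_sets V E v = {T. indep_set V E T \<and> (\<forall>u\<in>T. \<not> E v u)}"

definition uncovered :: "(nat \<Rightarrow> nat \<Rightarrow> bool) \<Rightarrow> nat \<Rightarrow> nat set \<Rightarrow> nat set" where
  "uncovered E v T = {u. E v u \<and> (\<forall>w\<in>T. \<not> E u w)}"

context
  fixes V :: "nat set" and E :: "nat \<Rightarrow> nat \<Rightarrow> bool" and x :: real
  assumes G: "sgraph V E" and tf: "triangle_free V E"
begin

lemma finite_avoiding_indep_sets: "finite (avoiding_indep_sets V E v)"
  using finite_indep_sets[OF G]
  by (rule finite_subset[rotated]) (auto simp: avoiding_indep_sets_def)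

lemma finite_uncovered: "finite (uncovered E v T)"
  by (rule finite_subset[OF _ sgraph_finite[OF G]])
    (use sgraph_edge_in[OF G] in \<open>auto simp: uncovered_def\<close>)

lemma indep_set_avoiding_Un_uncovered:
  assumes T: "T \<in> avoiding_indep_sets V E v" and S: "S \<subseteq> uncovered E v T"
  shows "indep_set V E (T \<union> S)"
  unfolding indep_set_def
proof (intro conjI ballI notI)
  show "T \<union> S \<subseteq> V"
    using T S sgraph_edge_in[OF G]
    by (auto simp: avoiding_indep_sets_def uncovered_def indep_set_def)
next
  fix a b assume a: "a \<in> T \<union> S" and b: "b \<in> T \<union> S" and ab: "E a b"
  have sym: "E b a" using ab by (rule sgraph_sym[OF G])
  consider "a \<in> T" "b \<in> T" | "a \<in> T" "b \<in> S" | "a \<in> S" "b \<in> T" | "a \<in> S" "b \<in> S"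
    using a b by blast
  then show False
  proof cases
    case 1
    then show False using T ab by (auto simp: avoiding_indep_sets_def indep_set_def)
  next
    case 2
    then show False using S sym by (auto simp: uncovered_def)
  next
    case 3
    then show False using S ab by (auto simp: uncovered_def)
  next
    case 4
    then have "E v a" "E v b" using S by (auto simp: uncovered_def)
    then show False using triangle_freeD[OF G tf _ ab] by blast
  qed
qed

text \<open>An independent set \<open>J\<close> splits uniquely into \<open>T = J - N(v)\<close>, an independent set avoiding
  \<open>N(v)\<close>, and \<open>J \<inter> N(v)\<close>, which may be any set of neighbours of \<open>v\<close> that \<open>T\<close> leaves uncovered,
  because \<open>N(v)\<close> is independent in a triangle-free graph.\<close>
lemma sum_indep_sets_split:
  "(\<Sum>J | indep_set V E J. f J)
     = (\<Sum>T\<in>avoiding_indep_sets V E v. \<Sum>S\<in>Pow (uncovered E v T). f (T \<union> S))"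
proof -
  define N where "N = {u. E v u}"
  have "bij_betw (\<lambda>(T, S). T \<union> S)
          (SIGMA T:avoiding_indep_sets V E v. Pow (uncovered E v T)) {J. indep_set V E J}"
  proof (rule bij_betw_byWitness[where f' = "\<lambda>J. (J - N, J \<inter> N)"])
    show "(\<lambda>(T, S). T \<union> S) ` (SIGMA T:avoiding_indep_sets V E v. Pow (uncovered E v T))
        \<subseteq> {J. indep_set V E J}"
      using indep_set_avoiding_Un_uncovered by auto
    show "(\<lambda>J. (J - N, J \<inter> N)) ` {J. indep_set V E J}
        \<subseteq> (SIGMA T:avoiding_indep_sets V E v. Pow (uncovered E v T))"
      by (auto simp: avoiding_indep_sets_def uncovered_def N_def indep_set_def)
  qed (auto simp: avoiding_indep_sets_def uncovered_def N_def)
  then have "(\<Sum>J | indep_set V E J. f J)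
      = (\<Sum>(T, S)\<in>(SIGMA T:avoiding_indep_sets V E v. Pow (uncovered E v T)). f (T \<union> S))"
    by (simp add: sum.reindex_bij_betw[symmetric] case_prod_unfold)
  also have "\<dots> = (\<Sum>T\<in>avoiding_indep_sets V E v. \<Sum>S\<in>Pow (uncovered E v T). f (T \<union> S))"
    by (rule sum.Sigma[symmetric]) (auto simp: finite_avoiding_indep_sets finite_uncovered)
  finally show ?thesis .
qed

lemma card_avoiding_Un_uncovered:
  assumes "T \<in> avoiding_indep_sets V E v" "S \<subseteq> uncovered E v T"
  shows "card (T \<union> S) = card T + card S"
proof (rule card_Un_disjoint)
  show "finite T"
    using assms(1) finite_subset[OF _ sgraph_finite[OF G]]
    by (auto simp: avoiding_indep_sets_def indep_set_def)
  show "finite S" using assms(2) finite_uncovered finite_subset by blast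
  show "T \<inter> S = {}" using assms by (auto simp: avoiding_indep_sets_def uncovered_def)
qed

lemma indep_poly_split:
  "indep_poly V E x
     = (\<Sum>T\<in>avoiding_indep_sets V E v. x ^ card T * (1 + x) ^ card (uncovered E v T))"
  unfolding indep_poly_def sum_indep_sets_split[of _ v]
  by (intro sum.cong refl)
    (simp add: card_avoiding_Un_uncovered power_add sum_distrib_left[symmetric]
      sum_Pow_power_card finite_uncovered)

lemma sum_indep_sets_card_neighbours:
  assumes "1 + x \<noteq> 0"
  shows "(\<Sum>J | indep_set V E J. x ^ card J * real (card (J \<inter> {u. E v u})))
     = x / (1 + x) * (\<Sum>T\<in>avoiding_indep_sets V E v.
          x ^ card T * (1 + x) ^ card (uncovered E v T) * real (card (uncovered E v T)))"
proof -
  have nbrs: "(T \<union> S) \<inter> {u. E v u} = S"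
    if "T \<in> avoiding_indep_sets V E v" "S \<subseteq> uncovered E v T" for T S
    using that by (auto simp: avoiding_indep_sets_def uncovered_def)
  have "(\<Sum>J | indep_set V E J. x ^ card J * real (card (J \<inter> {u. E v u})))
      = (\<Sum>T\<in>avoiding_indep_sets V E v.
           x ^ card T * (\<Sum>S\<in>Pow (uncovered E v T). real (card S) * x ^ card S))"
    unfolding sum_indep_sets_split[of _ v]
    by (intro sum.cong refl)
      (simp add: nbrs card_avoiding_Un_uncovered power_add sum_distrib_left mult_ac)
  also have "\<dots> = (\<Sum>T\<in>avoiding_indep_sets V E v. x / (1 + x) *
          (x ^ card T * (1 + x) ^ card (uncovered E v T) * real (card (uncovered E v T))))"
  proof (intro sum.cong refl)
    fix T
    have "real n * x * (1 + x) ^ (n - 1) = x / (1 + x) * ((1 + x) ^ n * real n)" for n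
      using assms by (cases n) (simp_all add: field_simps)
    then show "x ^ card T * (\<Sum>S\<in>Pow (uncovered E v T). real (card S) * x ^ card S)
        = x / (1 + x) *
          (x ^ card T * (1 + x) ^ card (uncovered E v T) * real (card (uncovered E v T)))"
      by (simp add: sum_Pow_card_power_card finite_uncovered)
  qed
  finally show ?thesis by (simp add: sum_distrib_left)
qed

text \<open>\<open>T \<mapsto> insert v T\<close> pairs the sets avoiding \<open>N(v)\<close> that miss \<open>v\<close> with those containing it.\<close>
lemma sum_avoiding_indep_sets_member:
  assumes "v \<in> V" "1 + x \<noteq> 0"
  shows "(\<Sum>T\<in>avoiding_indep_sets V E v. if v \<in> T then x ^ card T else 0)
     = x / (1 + x) * (\<Sum>T\<in>avoiding_indep_sets V E v. x ^ card T)"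
proof -
  define A where "A = avoiding_indep_sets V E v"
  have fin: "finite A" unfolding A_def by (rule finite_avoiding_indep_sets)
  have bij: "bij_betw (insert v) {T\<in>A. v \<notin> T} {T\<in>A. v \<in> T}"
  proof (rule bij_betw_byWitness[where f' = "\<lambda>T. T - {v}"])
    show "insert v ` {T\<in>A. v \<notin> T} \<subseteq> {T\<in>A. v \<in> T}"
      using assms(1) sgraph_sym[OF G] sgraph_irrefl[OF G]
      unfolding A_def avoiding_indep_sets_def indep_set_def by blast
  qed (auto simp: A_def avoiding_indep_sets_def indep_set_def)
  have card_insert: "card (insert v T) = Suc (card T)" if "T \<in> A" "v \<notin> T" for T
    using that finite_subset[OF _ sgraph_finite[OF G]]
    by (auto simp: A_def avoiding_indep_sets_def indep_set_def)
  define p where "p = (\<Sum>T\<in>A. if v \<in> T then x ^ card T else 0)"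
  define q where "q = (\<Sum>T\<in>A. if v \<notin> T then x ^ card T else 0)"
  have "p = (\<Sum>T | T \<in> A \<and> v \<in> T. x ^ card T)"
    unfolding p_def using fin by (simp add: sum.inter_filter)
  also have "\<dots> = (\<Sum>T | T \<in> A \<and> v \<notin> T. x ^ card (insert v T))"
    using sum.reindex_bij_betw[OF bij, of "\<lambda>T. x ^ card T"] by simp
  also have "\<dots> = (\<Sum>T | T \<in> A \<and> v \<notin> T. x * x ^ card T)"
    by (rule sum.cong) (simp_all add: card_insert)
  also have "\<dots> = x * q"
    unfolding q_def using fin
    by (simp add: sum.inter_filter[symmetric] sum_distrib_left if_distrib[where f = "(*) x"])
  finally have "p = x * q" .
  moreover have "(\<Sum>T\<in>A. x ^ card T) = p + q"
    unfolding p_def q_def sum.distrib[symmetric] by (intro sum.cong) auto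
  ultimately show ?thesis
    using assms(2) by (simp add: A_def[symmetric] p_def[symmetric] field_simps)
qed

lemma sum_indep_sets_member:
  assumes "v \<in> V" "1 + x \<noteq> 0"
  shows "(\<Sum>J | indep_set V E J. if v \<in> J then x ^ card J else 0)
     = x / (1 + x) * (\<Sum>T\<in>avoiding_indep_sets V E v. x ^ card T)"
proof -
  have "(\<Sum>S\<in>Pow (uncovered E v T). if v \<in> T \<union> S then x ^ card (T \<union> S) else 0)
      = (if v \<in> T then x ^ card T else 0)" if "T \<in> avoiding_indep_sets V E v" for T
  proof (cases "v \<in> T")
    case True
    then have "uncovered E v T = {}" using sgraph_sym[OF G] unfolding uncovered_def by blast
    then show ?thesis using True by simp
  next
    case False
    then have "v \<notin> S" if "S \<subseteq> uncovered E v T" for S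
      using that sgraph_irrefl[OF G] by (auto simp: uncovered_def)
    then show ?thesis using False by (auto intro: sum.neutral)
  qed
  then show ?thesis
    unfolding sum_indep_sets_split[of _ v] sum_avoiding_indep_sets_member[OF assms, symmetric]
    by (intro sum.cong refl) auto
qed

end

lemma sum_card_neighbours_le:
  assumes "sgraph V E" "J \<subseteq> V" "\<And>v. v \<in> V \<Longrightarrow> real (degree V E v) \<le> D"
  shows "(\<Sum>v\<in>V. real (card (J \<inter> {u. E v u}))) \<le> D * real (card J)"
proof -
  have fin: "finite V" "finite J" using assms(1,2) sgraph_finite finite_subset by blast+
  have "(\<Sum>v\<in>V. real (card (J \<inter> {u. E v u}))) = (\<Sum>v\<in>V. \<Sum>u\<in>J. if E v u then 1 else 0)"
    using fin by (simp add: Int_def real_card_filter[symmetric] conj_commute)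
  also have "\<dots> = (\<Sum>u\<in>J. \<Sum>v\<in>V. if E v u then 1 else 0)" by (rule sum.swap)
  also have "\<dots> = (\<Sum>u\<in>J. real (degree V E u))"
  proof (intro sum.cong refl)
    fix u
    have "{v\<in>V. E v u} = {v\<in>V. E u v}" using sgraph_sym[OF assms(1)] by blast
    then show "(\<Sum>v\<in>V. if E v u then 1 else 0) = real (degree V E u)"
      using fin by (simp add: degree_def real_card_filter[symmetric])
  qed
  also have "\<dots> \<le> (\<Sum>u\<in>J. D)" using assms(2,3) by (intro sum_mono) auto
  finally show ?thesis by (simp add: mult.commute)
qed

text \<open>Under the hard-core model \<open>J - N(v) = T\<close> has weight \<open>x^|T| (1 + x)^|uncovered E v T|\<close>, so
  this is the expected number \<open>y\<^sub>v\<close> of neighbours of \<open>v\<close> that \<open>J - N(v)\<close> leaves uncovered.\<close>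
definition uncovered_mean :: "nat set \<Rightarrow> (nat \<Rightarrow> nat \<Rightarrow> bool) \<Rightarrow> real \<Rightarrow> nat \<Rightarrow> real" where
  "uncovered_mean V E x v = (\<Sum>T\<in>avoiding_indep_sets V E v.
      x ^ card T * (1 + x) ^ card (uncovered E v T) * real (card (uncovered E v T)))
    / indep_poly V E x"

context
  fixes V :: "nat set" and E :: "nat \<Rightarrow> nat \<Rightarrow> bool" and x :: real
  assumes G: "sgraph V E" and tf: "triangle_free V E" and x: "0 < x"
begin

lemma occupancy_member_ge:
  assumes "v \<in> V"
  shows "x / (1 + x) * indep_poly V E x * exp (- ln (1 + x) * uncovered_mean V E x v)
     \<le> (\<Sum>J | indep_set V E J. if v \<in> J then x ^ card J else 0)"
proof -
  define A where "A = avoiding_indep_sets V E v"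
  define w where "w T = x ^ card T * (1 + x) ^ card (uncovered E v T)" for T
  define y where "y T = real (card (uncovered E v T))" for T
  have Z: "sum w A = indep_poly V E x"
    unfolding w_def A_def by (rule indep_poly_split[OF G tf, symmetric])
  have wexp: "w T * exp (- ln (1 + x) * y T) = x ^ card T" for T
  proof -
    have "exp (ln (1 + x) * y T) = exp (ln (1 + x)) ^ card (uncovered E v T)"
      unfolding y_def by (metis exp_of_nat_mult mult.commute)
    then have "exp (ln (1 + x) * y T) = (1 + x) ^ card (uncovered E v T)"
      using x by simp
    then show ?thesis using x by (simp add: w_def exp_minus)
  qed
  have mean: "(\<Sum>T\<in>A. w T * y T) / indep_poly V E x = uncovered_mean V E x v"
    unfolding uncovered_mean_def A_def by (simp add: w_def y_def)
  have "sum w A * exp (- ln (1 + x) * ((\<Sum>T\<in>A. w T * y T) / sum w A))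
      \<le> (\<Sum>T\<in>A. w T * exp (- ln (1 + x) * y T))"
  proof (rule exp_weighted_mean_le)
    show "0 < sum w A" using indep_poly_pos[OF G x] by (simp only: Z)
  qed (use finite_avoiding_indep_sets[OF G tf] x in \<open>simp_all add: A_def w_def\<close>)
  then have "indep_poly V E x * exp (- ln (1 + x) * uncovered_mean V E x v)
      \<le> (\<Sum>T\<in>A. x ^ card T)"
    by (simp only: Z mean wexp)
  then have "x / (1 + x) * (indep_poly V E x * exp (- ln (1 + x) * uncovered_mean V E x v))
      \<le> x / (1 + x) * (\<Sum>T\<in>A. x ^ card T)"
    using x by (intro mult_left_mono) auto
  then show ?thesis
    using x assms by (simp only: A_def sum_indep_sets_member[OF G tf] mult.assoc)
qed

lemma occupancy_neighbours_eq:
  "(\<Sum>J | indep_set V E J. x ^ card J * real (card (J \<inter> {u. E v u})))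
     = x / (1 + x) * indep_poly V E x * uncovered_mean V E x v"
  using x indep_poly_pos[OF G x]
  by (simp add: sum_indep_sets_card_neighbours[OF G tf] uncovered_mean_def)

lemma occupancy_bounds:
  assumes "V \<noteq> {}" and deg: "\<And>v. v \<in> V \<Longrightarrow> real (degree V E v) \<le> D"
  obtains y where "x / (1 + x) * exp (- ln (1 + x) * y) \<le> avg_indep V E x / real (card V)"
    and "x / (1 + x) * y \<le> D * (avg_indep V E x / real (card V))"
proof
  define n where "n = real (card V)"
  define Z where "Z = indep_poly V E x"
  define M where "M = (\<Sum>J | indep_set V E J. real (card J) * x ^ card J)"
  define y where "y = (\<Sum>v\<in>V. uncovered_mean V E x v) / n"
  have fin: "finite V" by (rule sgraph_finite[OF G])
  have n: "n > 0" unfolding n_def using fin assms(1) by (simp add: card_gt_0_iff)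
  have Z: "Z > 0" unfolding Z_def by (rule indep_poly_pos[OF G x])
  have avg: "avg_indep V E x = M / Z" unfolding M_def Z_def by (rule avg_indep_eq[OF G])
  have M_vertices: "M = (\<Sum>v\<in>V. \<Sum>J | indep_set V E J. if v \<in> J then x ^ card J else 0)"
    unfolding M_def by (rule sum_card_power_eq_sum_vertices[OF G])
  have "x / (1 + x) * Z * (n * exp (- ln (1 + x) * y))
      \<le> x / (1 + x) * Z * (\<Sum>v\<in>V. 1 * exp (- ln (1 + x) * uncovered_mean V E x v))"
    using exp_weighted_mean_le[of V "\<lambda>_. 1" "ln (1 + x)" "uncovered_mean V E x"] fin n x Z
    by (intro mult_left_mono) (auto simp: y_def n_def)
  also have "\<dots> \<le> M"
    unfolding M_vertices sum_distrib_left Z_def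
    using occupancy_member_ge by (intro sum_mono) (simp add: mult.assoc)
  finally show "x / (1 + x) * exp (- ln (1 + x) * y) \<le> avg_indep V E x / real (card V)"
    using n Z by (simp add: avg n_def[symmetric] field_simps)
  have "x / (1 + x) * Z * (n * y) = (\<Sum>v\<in>V. x / (1 + x) * Z * uncovered_mean V E x v)"
  proof -
    have "n * y = (\<Sum>v\<in>V. uncovered_mean V E x v)" using n by (simp add: y_def)
    then show ?thesis by (simp add: sum_distrib_left)
  qed
  also have "\<dots> = (\<Sum>v\<in>V. \<Sum>J | indep_set V E J. x ^ card J * real (card (J \<inter> {u. E v u})))"
    by (simp add: Z_def occupancy_neighbours_eq)
  also have "\<dots> = (\<Sum>J | indep_set V E J. x ^ card J * (\<Sum>v\<in>V. real (card (J \<inter> {u. E v u}))))"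
    by (subst sum.swap) (simp add: sum_distrib_left)
  also have "\<dots> \<le> (\<Sum>J | indep_set V E J. x ^ card J * (D * real (card J)))"
    using x sum_card_neighbours_le[OF G indep_set_subset deg]
    by (intro sum_mono mult_left_mono) auto
  also have "\<dots> = D * M" by (simp add: M_def sum_distrib_left mult_ac)
  finally show "x / (1 + x) * y \<le> D * (avg_indep V E x / real (card V))"
    using n Z by (simp add: avg n_def[symmetric] field_simps)
qed

end

lemma avg_indep_ge_Shearer:
  assumes x: "0 < x" and \<theta>: "0 < \<theta>" "\<theta> < x / (1 + x) / ln (1 + x)"
  shows "\<forall>\<^sub>F D in at_top. \<forall>V E. sgraph V E \<longrightarrow> triangle_free V E \<longrightarrow> V \<noteq> {}
           \<longrightarrow> (\<forall>v\<in>V. real (degree V E v) \<le> D)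
           \<longrightarrow> \<theta> * real (card V) * ln D / D \<le> avg_indep V E x"
proof -
  have "\<forall>\<^sub>F D in at_top. \<forall>y t. x / (1 + x) * exp (- ln (1 + x) * y) \<le> t
          \<longrightarrow> x / (1 + x) * y \<le> D * t \<longrightarrow> \<theta> * ln D / D \<le> t"
    using assms by (intro exp_linear_tradeoff) auto
  then show ?thesis
  proof eventually_elim
    case (elim D)
    show ?case
    proof (intro allI impI)
      fix V E assume G: "sgraph V E" and tf: "triangle_free V E" and "V \<noteq> {}"
        and "\<forall>v\<in>V. real (degree V E v) \<le> D"
      then obtain y where
        "x / (1 + x) * exp (- ln (1 + x) * y) \<le> avg_indep V E x / real (card V)"
        "x / (1 + x) * y \<le> D * (avg_indep V E x / real (card V))"
        using occupancy_bounds[OF G tf x] by blast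
      then have "\<theta> * ln D / D \<le> avg_indep V E x / real (card V)"
        using elim by blast
      moreover have "0 < real (card V)"
        using \<open>V \<noteq> {}\<close> sgraph_finite[OF G] by (simp add: card_gt_0_iff)
      ultimately show "\<theta> * real (card V) * ln D / D \<le> avg_indep V E x"
        by (simp add: field_simps)
    qed
  qed
qed

section \<open>Minimum-degree cores\<close>

definition induced_edges :: "nat set \<Rightarrow> (nat \<Rightarrow> nat \<Rightarrow> bool) \<Rightarrow> nat \<Rightarrow> nat \<Rightarrow> bool" where
  "induced_edges W E a b \<longleftrightarrow> E a b \<and> a \<in> W \<and> b \<in> W"

lemma sgraph_induced:
  assumes "sgraph V E" "W \<subseteq> V"
  shows "sgraph W (induced_edges W E)"
  using assms finite_subset
    sgraph_sym[OF assms(1)] sgraph_irrefl[OF assms(1)] sgraph_finite[OF assms(1)]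
  unfolding sgraph_def induced_edges_def by blast

lemma triangle_free_induced:
  assumes "triangle_free V E" "W \<subseteq> V"
  shows "triangle_free W (induced_edges W E)"
  using assms unfolding triangle_free_def induced_edges_def by blast

lemma indep_set_induced:
  assumes "W \<subseteq> V" "indep_set W (induced_edges W E) J"
  shows "indep_set V E J"
  using assms unfolding indep_set_def induced_edges_def by blast

lemma indep_number_induced_le:
  assumes "sgraph V E" "W \<subseteq> V"
  shows "indep_number W (induced_edges W E) \<le> indep_number V E"
proof -
  obtain J where "indep_set W (induced_edges W E) J" "card J = indep_number W (induced_edges W E)"
    using indep_number_attained[OF sgraph_induced[OF assms]] .
  then show ?thesis using indep_number_ge[OF assms(1)] indep_set_induced[OF assms(2)] by metis
qed

lemma min_degree_induced_ge:
  assumes "finite W" "W \<noteq> {}" "\<And>a. a \<in> W \<Longrightarrow> d \<le> card {b\<in>W. E a b}"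
  shows "d \<le> min_degree W (induced_edges W E)"
proof -
  have "degree W (induced_edges W E) a = card {b\<in>W. E a b}" if "a \<in> W" for a
    using that unfolding degree_def induced_edges_def by (metis (no_types, lifting))
  then show ?thesis using assms by (simp add: min_degree_def Min_ge_iff)
qed

text \<open>Deleting a vertex of degree below \<open>d\<close> together with its neighbourhood removes at most
  \<open>d\<close> vertices and lowers the independence number, so at most \<open>m\<close> such deletions occur.\<close>
lemma min_degree_core_exists:
  assumes "finite V" "\<And>a. \<not> E a a" "\<And>a b. E a b \<Longrightarrow> E b a"
    and "\<And>J. indep_set V E J \<Longrightarrow> card J \<le> m"
  shows "\<exists>W\<subseteq>V. (\<forall>a\<in>W. d \<le> card {b\<in>W. E a b}) \<and> card (V - W) \<le> (d + 1) * m"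
  using assms(1,4)
proof (induction "card V" arbitrary: V m rule: less_induct)
  case less
  show ?case
  proof (cases "\<forall>a\<in>V. d \<le> card {b\<in>V. E a b}")
    case True
    then show ?thesis by (intro exI[of _ V]) auto
  next
    case False
    then obtain v where v: "v \<in> V" "card {b\<in>V. E v b} < d" by (auto simp: not_le)
    define N where "N = {b\<in>V. E v b}"
    define V' where "V' = V - insert v N"
    have fin': "finite V'" unfolding V'_def using less.prems(1) by simp
    have smaller: "card V' < card V"
      unfolding V'_def using v less.prems(1) by (intro psubset_card_mono) auto
    have "indep_set V E {v}" using v assms(2) by (simp add: indep_set_def)
    then have m: "1 \<le> m" using less.prems(2) by force
    have "card J \<le> m - 1" if J: "indep_set V' E J" for J
    proof -
      have "J \<subseteq> V'" "finite J" using J fin' finite_subset by (auto simp: indep_set_def)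
      moreover have "indep_set V E (insert v J)"
        using J v assms(2,3) unfolding indep_set_def V'_def N_def by blast
      moreover have "v \<notin> J" using \<open>J \<subseteq> V'\<close> by (auto simp: V'_def)
      ultimately show ?thesis using less.prems(2)[of "insert v J"] by simp
    qed
    then obtain W where W: "W \<subseteq> V'" "\<forall>a\<in>W. d \<le> card {b\<in>W. E a b}"
        "card (V' - W) \<le> (d + 1) * (m - 1)"
      using less.hyps[OF smaller fin'] by blast
    have "card (V - W) \<le> card (insert v N) + card (V' - W)"
      by (rule order_trans[OF card_mono card_Un_le])
        (use less.prems(1) in \<open>auto simp: V'_def N_def\<close>)
    also have "card (insert v N) \<le> d"
      using v less.prems(1) by (simp add: N_def card_insert_if)
    finally have "card (V - W) \<le> (d + 1) * m"
      using W(3) m by (cases m) auto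
    then show ?thesis using W(1,2) by (intro exI[of _ W]) (auto simp: V'_def)
  qed
qed

lemma card_le_of_min_degree_core_bound:
  assumes G: "sgraph V E" and indep: "\<And>J. indep_set V E J \<Longrightarrow> card J \<le> m"
    and core: "\<And>W. W \<subseteq> V \<Longrightarrow> W \<noteq> {} \<Longrightarrow> d \<le> min_degree W (induced_edges W E) \<Longrightarrow> real (card W) \<le> B"
    and "0 \<le> B"
  shows "real (card V) \<le> B + real ((d + 1) * m)"
proof -
  have "\<exists>W\<subseteq>V. (\<forall>a\<in>W. d \<le> card {b\<in>W. E a b}) \<and> card (V - W) \<le> (d + 1) * m"
    using sgraph_finite[OF G] sgraph_irrefl[OF G] sgraph_sym[OF G] indep
    by (rule min_degree_core_exists)
  then obtain W where W: "W \<subseteq> V" "\<forall>a\<in>W. d \<le> card {b\<in>W. E a b}" "card (V - W) \<le> (d + 1) * m"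
    by blast
  have "real (card W) \<le> B"
  proof (cases "W = {}")
    case False
    then show ?thesis
      using W finite_subset[OF W(1) sgraph_finite[OF G]]
      by (intro core min_degree_induced_ge) auto
  qed (use \<open>0 \<le> B\<close> in simp)
  moreover have "card V = card W + card (V - W)"
    using W(1) sgraph_finite[OF G]
    by (metis card_Diff_subset card_mono finite_subset le_add_diff_inverse)
  ultimately show ?thesis using of_nat_mono[OF W(3), where 'a = real] by simp
qed

section \<open>Ramsey numbers\<close>

lemma ramsey3_le_of_card_bound:
  assumes "0 \<le> B"
    and bound: "\<And>N E. sgraph {0..<N} E \<Longrightarrow> triangle_free {0..<N} E \<Longrightarrow> indep_number {0..<N} E < k
                \<Longrightarrow> real N \<le> B"
  shows "real (ramsey3 k) \<le> B + 1"
proof -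
  define N where "N = nat \<lfloor>B\<rfloor> + 1"
  have "ramsey3 k \<le> N"
    unfolding ramsey3_def
  proof (rule Least_le, intro allI impI)
    fix E assume G: "sgraph {0..<N} E"
    show "\<not> triangle_free {0..<N} E \<or> (\<exists>J. indep_set {0..<N} E J \<and> card J = k)"
    proof (cases "triangle_free {0..<N} E")
      case True
      moreover have "B < real N" unfolding N_def by linarith
      ultimately have "k \<le> indep_number {0..<N} E"
        using G bound[of N E] by force
      moreover obtain J where J: "indep_set {0..<N} E J" "card J = indep_number {0..<N} E"
        using indep_number_attained[OF G] .
      ultimately obtain J' where "J' \<subseteq> J" "card J' = k"
        by (metis obtain_subset_with_card_n)
      moreover have "indep_set {0..<N} E J'"
        using J(1) \<open>J' \<subseteq> J\<close> unfolding indep_set_def by blast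
      ultimately show ?thesis by blast
    qed simp
  qed
  then show ?thesis using assms(1) by (simp add: N_def) linarith
qed

lemma card_le_of_ratio_bound:
  assumes "sgraph V E" "indep_number V E < k"
    and "r * avg_indep V E x \<le> real (indep_number V E)"
    and "\<theta> * real (card V) * ln (real k) / real k \<le> avg_indep V E x"
    and "0 < r" "0 < \<theta>" "1 < k"
  shows "real (card V) \<le> real k ^ 2 / (r * \<theta> * ln (real k))"
proof -
  have "r * (\<theta> * real (card V) * ln (real k) / real k) < real k"
    using assms(2-5) mult_left_mono[OF assms(4), of r] by linarith
  moreover have "0 < r * \<theta> * ln (real k)" using assms(5-7) by simp
  ultimately show ?thesis using assms(7) by (simp add: field_simps power2_eq_square)
qed

lemma card_le_of_indep_number_less:
  assumes G: "sgraph V E" and tf: "triangle_free V E" and "indep_number V E < k"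
    and "1 < k" "0 < r" "0 < \<theta>"
    and ratio: "\<And>W. W \<subseteq> V \<Longrightarrow> W \<noteq> {} \<Longrightarrow> d \<le> min_degree W (induced_edges W E)
                 \<Longrightarrow> r * avg_indep W (induced_edges W E) x
                      \<le> real (indep_number W (induced_edges W E))"
    and Shearer: "\<forall>V E. sgraph V E \<longrightarrow> triangle_free V E \<longrightarrow> V \<noteq> {}
                   \<longrightarrow> (\<forall>v\<in>V. real (degree V E v) \<le> real k)
                   \<longrightarrow> \<theta> * real (card V) * ln (real k) / real k \<le> avg_indep V E x"
  shows "real (card V) \<le> real k ^ 2 / (r * \<theta> * ln (real k)) + real ((d + 1) * k)"
proof (rule card_le_of_min_degree_core_bound[OF G])
  show "card J \<le> k" if "indep_set V E J" for J
    using indep_number_ge[OF G that] assms(3) by simp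
  show "0 \<le> real k ^ 2 / (r * \<theta> * ln (real k))" using assms(4-6) by simp
next
  fix W assume W: "W \<subseteq> V" "W \<noteq> {}" "d \<le> min_degree W (induced_edges W E)"
  note GW = sgraph_induced[OF G W(1)] and tfW = triangle_free_induced[OF tf W(1)]
  have indep_W: "indep_number W (induced_edges W E) < k"
    using indep_number_induced_le[OF G W(1)] assms(3) by simp
  then have "\<forall>v\<in>W. real (degree W (induced_edges W E) v) \<le> real k"
    using degree_le_indep_number[OF GW tfW] by (metis of_nat_le_iff le_trans less_imp_le)
  then have "\<theta> * real (card W) * ln (real k) / real k \<le> avg_indep W (induced_edges W E) x"
    using Shearer GW tfW W(2) by blast
  then show "real (card W) \<le> real k ^ 2 / (r * \<theta> * ln (real k))"
    using card_le_of_ratio_bound[OF GW indep_W ratio[OF W]] assms(4-6) by blast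
qed

text \<open>A common weakening of the three hypotheses of the theorem: the ratio bound is needed only
  at arbitrarily small fugacities and for graphs of large minimum degree.\<close>
definition ratio_bound_at_small_fugacity :: "real \<Rightarrow> bool" where
  "ratio_bound_at_small_fugacity r \<longleftrightarrow> (\<forall>\<delta>>0. \<exists>x d. 0 < x \<and> x \<le> \<delta> \<and>
     (\<forall>V E. sgraph V E \<and> V \<noteq> {} \<and> triangle_free V E \<and> d \<le> min_degree V E
        \<longrightarrow> r * avg_indep V E x \<le> real (indep_number V E)))"

lemma ratio_bound_at_small_fugacityI:
  assumes "0 < lam" "0 \<le> r"
    and ratio: "\<And>V E. sgraph V E \<Longrightarrow> V \<noteq> {} \<Longrightarrow> triangle_free V E \<Longrightarrow> d \<le> min_degree V E
                 \<Longrightarrow> r \<le> real (indep_number V E) / avg_indep V E lam"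
  shows "ratio_bound_at_small_fugacity r"
  unfolding ratio_bound_at_small_fugacity_def
proof (intro allI impI)
  fix \<delta> :: real assume "0 < \<delta>"
  have "r * avg_indep V E (min \<delta> lam) \<le> real (indep_number V E)"
    if "sgraph V E" "V \<noteq> {}" "triangle_free V E" "d \<le> min_degree V E" for V E
  proof -
    have "r * avg_indep V E (min \<delta> lam) \<le> r * avg_indep V E lam"
      using avg_indep_mono[OF that(1)] \<open>0 < \<delta>\<close> assms(1,2) by (intro mult_left_mono) auto
    also have "\<dots> \<le> real (indep_number V E)"
      using ratio[OF that] avg_indep_pos[OF that(1,2) assms(1)] by (simp add: le_divide_eq)
    finally show ?thesis .
  qed
  then show "\<exists>x d. 0 < x \<and> x \<le> \<delta> \<and> (\<forall>V E. sgraph V E \<and> V \<noteq> {} \<and> triangle_free V E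
      \<and> d \<le> min_degree V E \<longrightarrow> r * avg_indep V E x \<le> real (indep_number V E))"
    using \<open>0 < \<delta>\<close> assms(1) by (intro exI[of _ "min \<delta> lam"] exI[of _ d]) auto
qed

lemma ratio_bound_at_small_fugacity_of_limit:
  assumes "eta \<longlonglongrightarrow> 0" "0 < lam" "0 \<le> r" "r < s"
    and ratio: "\<forall>V E. sgraph V E \<and> V \<noteq> {} \<and> triangle_free V E
                  \<longrightarrow> s - eta (min_degree V E) \<le> real (indep_number V E) / avg_indep V E lam"
  shows "ratio_bound_at_small_fugacity r"
proof -
  obtain d where "\<And>n. d \<le> n \<Longrightarrow> eta n < s - r"
    using order_tendstoD(2)[OF assms(1), of "s - r"] assms(4)
    by (auto simp: eventually_sequentially)
  then show ?thesis
    using ratio assms(2,3) by (intro ratio_bound_at_small_fugacityI[of lam r d]) force+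
qed

lemma ramsey3_eventually_le:
  assumes ratio: "ratio_bound_at_small_fugacity r" and "0 < r" "1 / r < c"
  shows "\<forall>\<^sub>F k in sequentially. real (ramsey3 k) \<le> c * real k ^ 2 / ln (real k)"
proof -
  define \<theta> where "\<theta> = (1 + 1 / (r * c)) / 2"
  have "0 < c" using assms(2,3) divide_pos_pos[of 1 r] by linarith
  have "1 < r * c" using assms(2,3) by (simp add: field_simps)
  then have \<theta>: "0 < \<theta>" "\<theta> < 1" "1 < r * \<theta> * c"
    using assms(2) \<open>0 < c\<close> by (simp_all add: \<theta>_def field_simps)
  then have "1 / (r * \<theta>) < c" using assms(2) by (simp add: field_simps)
  have "((\<lambda>x::real. x / (1 + x) / ln (1 + x)) \<longlongrightarrow> 1) (at_right 0)" by real_asymp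
  then have "\<forall>\<^sub>F x in at_right 0. \<theta> < x / (1 + x) / ln (1 + x)"
    using \<theta>(2) by (rule order_tendstoD)
  then obtain \<delta> where "0 < \<delta>" and small: "\<And>x. 0 < x \<Longrightarrow> x < \<delta> \<Longrightarrow> \<theta> < x / (1 + x) / ln (1 + x)"
    by (auto simp: eventually_at_right_field)
  then obtain x d where x: "0 < x" "x \<le> \<delta> / 2"
    and ratio_x: "\<And>V E. sgraph V E \<Longrightarrow> V \<noteq> {} \<Longrightarrow> triangle_free V E \<Longrightarrow> d \<le> min_degree V E
                    \<Longrightarrow> r * avg_indep V E x \<le> real (indep_number V E)"
    using ratio unfolding ratio_bound_at_small_fugacity_def by (metis half_gt_zero)
  have "\<forall>\<^sub>F k in sequentially. \<forall>V E. sgraph V E \<longrightarrow> triangle_free V E \<longrightarrow> V \<noteq> {}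
           \<longrightarrow> (\<forall>v\<in>V. real (degree V E v) \<le> real k)
           \<longrightarrow> \<theta> * real (card V) * ln (real k) / real k \<le> avg_indep V E x"
    using avg_indep_ge_Shearer[OF x(1) \<theta>(1) small[OF x(1)]] x(2) \<open>0 < \<delta>\<close>
    by (intro eventually_compose_filterlim[OF _ filterlim_real_sequentially]) auto
  moreover have "\<forall>\<^sub>F k in sequentially.
      (real d + 1) * real k + 1 / (r * \<theta>) * real k ^ 2 / ln (real k) + 1
        \<le> c * real k ^ 2 / ln (real k)"
    using \<open>1 / (r * \<theta>) < c\<close> by real_asymp
  ultimately show ?thesis using eventually_gt_at_top[of 1]
  proof eventually_elim
    case (elim k)
    have "real (ramsey3 k) \<le> real k ^ 2 / (r * \<theta> * ln (real k)) + real ((d + 1) * k) + 1"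
    proof (rule ramsey3_le_of_card_bound)
      fix N E assume G: "sgraph {0..<N} E" and tf: "triangle_free {0..<N} E"
        and "indep_number {0..<N} E < k"
      then have "real (card {0..<N}) \<le> real k ^ 2 / (r * \<theta> * ln (real k)) + real ((d + 1) * k)"
        using elim(3) assms(2) \<theta>(1)
        by (intro card_le_of_indep_number_less[OF G tf _ _ _ _ _ elim(1)] ratio_x
            sgraph_induced triangle_free_induced) auto
      then show "real N \<le> real k ^ 2 / (r * \<theta> * ln (real k)) + real ((d + 1) * k)" by simp
    qed (use elim(3) assms(2) \<theta>(1) in simp)
    with elim(2) show ?case by (simp add: algebra_simps)
  qed
qed

lemma ramsey3_eventually_le_half:
  assumes "\<And>r. 0 < r \<Longrightarrow> r < 2 \<Longrightarrow> ratio_bound_at_small_fugacity r"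
  shows "\<forall>eps>0. \<forall>\<^sub>F k in sequentially. real (ramsey3 k) \<le> (1/2 + eps) * real k ^ 2 / ln (real k)"
proof (intro allI impI)
  fix eps :: real assume "0 < eps"
  then have "ratio_bound_at_small_fugacity (2 / (1 + eps))" "1 / (2 / (1 + eps)) < 1/2 + eps"
    by (auto intro: assms simp: field_simps)
  then show "\<forall>\<^sub>F k in sequentially. real (ramsey3 k) \<le> (1/2 + eps) * real k ^ 2 / ln (real k)"
    using \<open>0 < eps\<close> by (intro ramsey3_eventually_le[where r = "2 / (1 + eps)"]) auto
qed

theorem lemma5p5:
  shows
  "((\<forall>V E. sgraph V E \<and> V \<noteq> {} \<and> triangle_free V E \<longrightarrow>
          real (indep_number V E) / avg_indep V E 1 \<ge> 4/3)
     \<longrightarrow> (\<forall>eps>0. eventually (\<lambda>k. real (ramsey3 k) \<le> (3/4 + eps) * real k ^ 2 / ln (real k)) sequentially))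
   \<and> ((\<exists>eta :: nat \<Rightarrow> real. eta \<longlonglongrightarrow> 0 \<and>
          (\<forall>d V E. sgraph V E \<and> V \<noteq> {} \<and> triangle_free V E \<and> min_degree V E = d \<longrightarrow>
             real (indep_number V E) / avg_indep V E 1 \<ge> 2 - eta d))
     \<longrightarrow> (\<forall>eps>0. eventually (\<lambda>k. real (ramsey3 k) \<le> (1/2 + eps) * real k ^ 2 / ln (real k)) sequentially))
   \<and> ((\<forall>eps>0. \<exists>lam>0. \<forall>V E. sgraph V E \<and> V \<noteq> {} \<and> triangle_free V E \<longrightarrow>
          real (indep_number V E) / avg_indep V E lam \<ge> 2 - eps)
     \<longrightarrow> (\<forall>eps>0. eventually (\<lambda>k. real (ramsey3 k) \<le> (1/2 + eps) * real k ^ 2 / ln (real k)) sequentially))"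
  apply (intro conjI impI)
  subgoal premises ratio
    using ratio_bound_at_small_fugacityI[of 1 "4/3" 0] ratio
    by (auto intro: ramsey3_eventually_le)
  subgoal premises ratio
  proof (rule ramsey3_eventually_le_half)
    fix r :: real assume "0 < r" "r < 2"
    with ratio show "ratio_bound_at_small_fugacity r"
      by (auto intro: ratio_bound_at_small_fugacity_of_limit[where lam = 1 and s = 2])
  qed
  subgoal premises ratio
  proof (rule ramsey3_eventually_le_half)
    fix r :: real assume "0 < r" "r < 2"
    then obtain lam where "0 < lam" and "\<forall>V E. sgraph V E \<and> V \<noteq> {} \<and> triangle_free V E
        \<longrightarrow> r \<le> real (indep_number V E) / avg_indep V E lam"
      using ratio[rule_format, of "2 - r"] by auto
    then show "ratio_bound_at_small_fugacity r"
      using \<open>0 < r\<close> by (intro ratio_bound_at_small_fugacityI[of lam r 0]) auto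
  qed
  done

end
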